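(* Let $G$ be a group and $a\in G$. The following are equivalent: (1) $a$ has infinite order; (2) there exist disjoint subsets $E_1,E_2$ of $G$ such that $aE_1\subseteq E_1$ and $aE_2\cap E_1\neq\emptyset$.
   Context: Here $aE=\{ax:x\in E\}$ denotes left translation in $G$. *)

theory Defs
  imports "HOL-Algebra.Algebra"
begin

end

theory Submission
  imports Defs
begin

(* If a has infinite order, E1 = {a^n | n > 0} and E2 = {1} work, since 1 is not a positive
   power of a. Conversely, if a has finite order n, then a^(n-1) inverts a, so a E1 \<subseteq> E1
   forces a^-1 E1 \<subseteq> E1; but a E2 \<inter> E1 \<noteq> {} means that E2 meets a^-1 E1. *)

lemma (in group) l_coset_stable_nat_pow:
  assumes "a \<in> carrier G" "E \<subseteq> carrier G" "a <# E \<subseteq> E" "x \<in> E"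
  shows "a [^] (n::nat) \<otimes> x \<in> E"
proof (induction n)
  case 0
  then show ?case using assms by auto
next
  case (Suc n)
  have "a [^] Suc n \<otimes> x = a \<otimes> (a [^] n \<otimes> x)"
    using assms by (simp only: nat_pow_Suc2) (simp add: m_assoc subsetD)
  also have "\<dots> \<in> a <# E"
    using Suc unfolding l_coset_def by blast
  finally show ?case using assms(3) by blast
qed

lemma (in group) l_coset_stable_cancel:
  assumes "a \<in> carrier G" "ord a \<noteq> 0" "E \<subseteq> carrier G" "a <# E \<subseteq> E"
    and "x \<in> carrier G" "a \<otimes> x \<in> E"
  shows "x \<in> E"
proof -
  have "a [^] (ord a - 1) \<otimes> (a \<otimes> x) = a [^] Suc (ord a - 1) \<otimes> x"
    using assms(1,5) by (simp add: m_assoc)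
  also have "\<dots> = x"
    using assms(1,2,5) by simp
  finally show ?thesis
    using l_coset_stable_nat_pow[OF assms(1,3,4,6)] by metis
qed

lemma (in group) l_coset_positive_powers:
  assumes "a \<in> carrier G"
  shows "a <# {a [^] n | n::nat. 0 < n} \<subseteq> {a [^] n | n::nat. 0 < n}"
proof
  fix y assume "y \<in> a <# {a [^] n | n::nat. 0 < n}"
  then obtain n :: nat where "y = a \<otimes> a [^] n"
    unfolding l_coset_def by blast
  then have "y = a [^] Suc n"
    using assms by (simp only: nat_pow_Suc2)
  then show "y \<in> {a [^] n | n::nat. 0 < n}" by blast
qed

theorem mainTheorem12:
  fixes G (structure) and a
  assumes "group G" and "a \<in> carrier G"
  shows "group.ord G a = 0 \<longleftrightarrow>
    (\<exists>E1 E2. E1 \<subseteq> carrier G \<and> E2 \<subseteq> carrier G \<and> E1 \<inter> E2 = {} \<and>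
       a <# E1 \<subseteq> E1 \<and> (a <# E2) \<inter> E1 \<noteq> {})"
proof
  interpret group G by fact
  assume "ord a = 0"
  let ?P = "{a [^] n | n::nat. 0 < n}"
  have "?P \<subseteq> carrier G" "a <# ?P \<subseteq> ?P"
    using assms(2) l_coset_positive_powers by auto
  moreover have "?P \<inter> {\<one>} = {}"
    using \<open>ord a = 0\<close> ord_eq_0[OF assms(2)] by auto
  moreover have "a \<in> (a <# {\<one>}) \<inter> ?P"
    using assms(2) unfolding l_coset_def by (auto intro!: exI[of _ 1])
  ultimately show "\<exists>E1 E2. E1 \<subseteq> carrier G \<and> E2 \<subseteq> carrier G \<and> E1 \<inter> E2 = {} \<and>
      a <# E1 \<subseteq> E1 \<and> (a <# E2) \<inter> E1 \<noteq> {}"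
    by (intro exI[of _ ?P] exI[of _ "{\<one>}"]) auto
next
  interpret group G by fact
  assume "\<exists>E1 E2. E1 \<subseteq> carrier G \<and> E2 \<subseteq> carrier G \<and> E1 \<inter> E2 = {} \<and>
      a <# E1 \<subseteq> E1 \<and> (a <# E2) \<inter> E1 \<noteq> {}"
  then obtain E1 E2 x where E: "E1 \<subseteq> carrier G" "E2 \<subseteq> carrier G" "E1 \<inter> E2 = {}"
      "a <# E1 \<subseteq> E1" and x: "x \<in> E2" "a \<otimes> x \<in> E1"
    unfolding l_coset_def by blast
  show "ord a = 0"
  proof (rule ccontr)
    assume "ord a \<noteq> 0"
    then have "x \<in> E1"
      using l_coset_stable_cancel[OF assms(2) _ E(1,4) _ x(2)] x(1) E(2) by blast
    then show False using x(1) E(3) by blast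
  qed
qed

end
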